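(* Let $\Theta$ and $\Omega=\{\omega_1,\dots,\omega_N\}$ be finite sets and $\rho:2^\Omega\to2^\Theta$ a refining, with induced partition $\Pi_i=\rho(\{\omega_i\})$, $i=1,\dots,N$, of $\Theta$. For each $i$ let $Bel_i$ be a belief function on $\Pi_i$ with mass $m_i$, and let $\overrightarrow{Bel_i}$ be its conditional embedding into $\Theta$. Let $\overrightarrow{Bel}=\overrightarrow{Bel_1}\oplus\cdots\oplus\overrightarrow{Bel_N}$ (Dempster's rule). Then (1) every focal element of $\overrightarrow{Bel}$ is of the form $\bigcup_{i=1}^N e_i$ where, for each $i$, $e_i$ is a focal element of $Bel_i$; and (2) the marginal of $\overrightarrow{Bel}$ on $\Omega$ is the vacuous belief function on $\Omega$ (the one with mass $1$ on $\Omega$).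
   Context: A refining $\rho:2^\Omega\to2^\Theta$ satisfies $\rho(\{\omega\})\ne\emptyset$ for all $\omega$, $\rho(\{\omega\})\cap\rho(\{\omega'\})=\emptyset$ for $\omega\ne\omega'$, $\bigcup_\omega\rho(\{\omega\})=\Theta$, and $\rho(B)=\bigcup_{\omega\in B}\rho(\{\omega\})$. Outer reduction: $\bar\rho(A)=\{\omega\in\Omega:\rho(\{\omega\})\cap A\ne\emptyset\}$ for $A\subseteq\Theta$. Mass functions $m:2^S\to[0,1]$, $m(\emptyset)=0$, $\sum m=1$; focal elements have positive mass; $Bel(A)=\sum_{B\subseteq A}m(B)$. Dempster's rule: $m_\oplus(A)\propto\sum_{B\cap C=A}m_1(B)m_2(C)$ for $A\ne\emptyset$, normalised to sum to $1$. The conditional embedding of a mass $m$ on $\Pi_i$ into $\Theta$ assigns mass $m(E)$ to $E\cup(\Theta\setminus\Pi_i)$ for each $E\subseteq\Pi_i$ and $0$ to all other subsets of $\Theta$. The marginal on $\Omega$ of a mass $m$ on $\Theta$ is $m\!\upharpoonright_\Omega(B)=\sum_{A\subseteq\Theta:\bar\rho(A)=B}m(A)$ for $B\subseteq\Omega$. *)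

theory Defs
  imports Complex_Main
begin

definition refining :: "'w set \<Rightarrow> 't set \<Rightarrow> ('w set \<Rightarrow> 't set) \<Rightarrow> bool" where
  "refining \<Omega> \<Theta> \<rho> \<longleftrightarrow>
     (\<forall>w\<in>\<Omega>. \<rho> {w} \<noteq> {}) \<and>
     (\<forall>w\<in>\<Omega>. \<forall>w'\<in>\<Omega>. w \<noteq> w' \<longrightarrow> \<rho> {w} \<inter> \<rho> {w'} = {}) \<and>
     (\<Union>w\<in>\<Omega>. \<rho> {w}) = \<Theta> \<and>
     (\<forall>B. B \<subseteq> \<Omega> \<longrightarrow> \<rho> B = (\<Union>w\<in>B. \<rho> {w}))"

definition outer_reduction :: "'w set \<Rightarrow> ('w set \<Rightarrow> 't set) \<Rightarrow> 't set \<Rightarrow> 'w set" where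
  "outer_reduction \<Omega> \<rho> A = {w \<in> \<Omega>. \<rho> {w} \<inter> A \<noteq> {}}"

definition is_mass :: "'a set \<Rightarrow> ('a set \<Rightarrow> real) \<Rightarrow> bool" where
  "is_mass S m \<longleftrightarrow> (\<forall>A. 0 \<le> m A \<and> m A \<le> 1) \<and> (\<forall>A. \<not> A \<subseteq> S \<longrightarrow> m A = 0) \<and>
     m {} = 0 \<and> (\<Sum>A\<in>Pow S. m A) = 1"

definition focal :: "('a set \<Rightarrow> real) \<Rightarrow> 'a set \<Rightarrow> bool" where
  "focal m A \<longleftrightarrow> m A > 0"

definition belief :: "('a set \<Rightarrow> real) \<Rightarrow> 'a set \<Rightarrow> real" where
  "belief m A = (\<Sum>B\<in>Pow A. m B)"

definition dempster_unnorm :: "'a set \<Rightarrow> ('a set \<Rightarrow> real) \<Rightarrow> ('a set \<Rightarrow> real) \<Rightarrow> 'a set \<Rightarrow> real" where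
  "dempster_unnorm S m1 m2 A = (\<Sum>(B,C)\<in>{(B,C). B \<subseteq> S \<and> C \<subseteq> S \<and> B \<inter> C = A}. m1 B * m2 C)"

definition dempster :: "'a set \<Rightarrow> ('a set \<Rightarrow> real) \<Rightarrow> ('a set \<Rightarrow> real) \<Rightarrow> 'a set \<Rightarrow> real" where
  "dempster S m1 m2 A =
     (if A = {} then 0
      else dempster_unnorm S m1 m2 A / (\<Sum>A'\<in>Pow S - {{}}. dempster_unnorm S m1 m2 A'))"

fun dempster_list :: "'a set \<Rightarrow> ('a set \<Rightarrow> real) list \<Rightarrow> 'a set \<Rightarrow> real" where
  "dempster_list S [] = (\<lambda>A. if A = S then 1 else 0)"
| "dempster_list S (m # ms) = foldl (dempster S) m ms"

text \<open>Conditional embedding of a mass m on P (a subset of Theta) into Theta: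
  mass m E goes to E \<union> (Theta - P) for E \<subseteq> P.\<close>
definition cond_embed :: "'t set \<Rightarrow> 't set \<Rightarrow> ('t set \<Rightarrow> real) \<Rightarrow> 't set \<Rightarrow> real" where
  "cond_embed \<Theta> P m A = (if \<exists>E. E \<subseteq> P \<and> A = E \<union> (\<Theta> - P) then m (A \<inter> P) else 0)"

definition marginal :: "'w set \<Rightarrow> 't set \<Rightarrow> ('w set \<Rightarrow> 't set) \<Rightarrow> ('t set \<Rightarrow> real) \<Rightarrow> 'w set \<Rightarrow> real" where
  "marginal \<Omega> \<Theta> \<rho> m B = (\<Sum>A\<in>{A. A \<subseteq> \<Theta> \<and> outer_reduction \<Omega> \<rho> A = B}. m A)"

definition vacuous :: "'a set \<Rightarrow> 'a set \<Rightarrow> real" where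
  "vacuous S B = (if B = S then 1 else 0)"

end

theory Submission
  imports Defs "HOL-Library.Disjoint_Sets"
begin

text \<open>The conditional embeddings live on the blocks of a partition of \<open>\<Theta>\<close>, so every focal
  element of the \<open>k\<close>-th embedding contains all blocks but the \<open>k\<close>-th one. Hence two focal
  elements of successive combinations never conflict, Dempster's rule needs no normalisation,
  and by induction the focal elements of the combination of the first \<open>k\<close> embeddings are
  \<open>e\<^sub>1 \<union> \<dots> \<union> e\<^sub>k \<union> (\<Theta> - (\<Pi>\<^sub>1 \<union> \<dots> \<union> \<Pi>\<^sub>k))\<close> with \<open>e\<^sub>i\<close> focal for \<open>m\<^sub>i\<close>. For \<open>k = N\<close> the
  complement is empty, and since each \<open>e\<^sub>i\<close> is a nonempty subset of \<open>\<Pi>\<^sub>i\<close>, every focal element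
  meets every block, i.e. its outer reduction is all of \<open>\<Omega>\<close>.\<close>

lemma focal_subset: "is_mass S m \<Longrightarrow> focal m A \<Longrightarrow> A \<subseteq> S"
  unfolding is_mass_def focal_def by force

lemma focal_nonempty: "is_mass S m \<Longrightarrow> focal m A \<Longrightarrow> A \<noteq> {}"
  unfolding is_mass_def focal_def by force

lemma sum_dempster_unnorm:
  assumes "finite S"
  shows "(\<Sum>A\<in>Pow S. dempster_unnorm S m1 m2 A) = (\<Sum>B\<in>Pow S. m1 B) * (\<Sum>C\<in>Pow S. m2 C)"
proof -
  let ?h = "\<lambda>(B, C). m1 B * m2 C"
  have "dempster_unnorm S m1 m2 A = sum ?h {x \<in> Pow S \<times> Pow S. (\<lambda>(B, C). B \<inter> C) x = A}" for A
    unfolding dempster_unnorm_def by (rule sum.cong) auto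
  then have "(\<Sum>A\<in>Pow S. dempster_unnorm S m1 m2 A) = sum ?h (Pow S \<times> Pow S)"
    using assms by (simp only:) (rule sum.group, auto)
  then show ?thesis
    by (simp add: sum_product sum.cartesian_product)
qed

lemma dempster_unnorm_nonneg:
  assumes "is_mass S m1" "is_mass S m2"
  shows "0 \<le> dempster_unnorm S m1 m2 A"
  using assms unfolding dempster_unnorm_def is_mass_def
  by (intro sum_nonneg) (auto intro: mult_nonneg_nonneg)

definition conflict_free :: "('a set \<Rightarrow> real) \<Rightarrow> ('a set \<Rightarrow> real) \<Rightarrow> bool" where
  "conflict_free m1 m2 \<longleftrightarrow> (\<forall>B C. focal m1 B \<longrightarrow> focal m2 C \<longrightarrow> B \<inter> C \<noteq> {})"

lemma dempster_unnorm_empty: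
  assumes "is_mass S m1" "is_mass S m2" "conflict_free m1 m2"
  shows "dempster_unnorm S m1 m2 {} = 0"
  unfolding dempster_unnorm_def
proof (rule sum.neutral, clarify)
  fix B C :: "'a set"
  assume "B \<inter> C = {}"
  then have "\<not> focal m1 B \<or> \<not> focal m2 C"
    using assms(3) unfolding conflict_free_def by blast
  then show "m1 B * m2 C = 0"
    using assms(1,2) unfolding focal_def is_mass_def by (metis mult_eq_0_iff order_less_le)
qed

lemma dempster_eq_dempster_unnorm:
  assumes "finite S" "is_mass S m1" "is_mass S m2" "conflict_free m1 m2"
  shows "dempster S m1 m2 A = dempster_unnorm S m1 m2 A"
proof -
  have empty: "dempster_unnorm S m1 m2 {} = 0"
    using assms(2-) by (rule dempster_unnorm_empty)
  have "(\<Sum>A\<in>Pow S. dempster_unnorm S m1 m2 A) = 1"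
    using assms(2,3) by (simp add: sum_dempster_unnorm[OF assms(1)] is_mass_def)
  then have "(\<Sum>A'\<in>Pow S - {{}}. dempster_unnorm S m1 m2 A') = 1"
    using assms(1) empty by (simp add: sum_diff1)
  then show ?thesis
    unfolding dempster_def using empty by simp
qed

lemma is_mass_dempster:
  assumes "finite S" "is_mass S m1" "is_mass S m2" "conflict_free m1 m2"
  shows "is_mass S (dempster S m1 m2)"
proof -
  let ?u = "dempster_unnorm S m1 m2"
  have total: "(\<Sum>A\<in>Pow S. ?u A) = 1"
    using assms(2,3) by (simp add: sum_dempster_unnorm[OF assms(1)] is_mass_def)
  have nonneg: "0 \<le> ?u A" for A
    using assms(2,3) by (rule dempster_unnorm_nonneg)
  have outside: "?u A = 0" if "\<not> A \<subseteq> S" for A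
    unfolding dempster_unnorm_def using that by (intro sum.neutral) auto
  have at_most_1: "?u A \<le> 1" for A
  proof (cases "A \<subseteq> S")
    case True
    then have "?u A \<le> (\<Sum>A\<in>Pow S. ?u A)"
      using assms(1) nonneg by (intro member_le_sum) auto
    then show ?thesis using total by simp
  qed (simp add: outside)
  show ?thesis
    unfolding is_mass_def dempster_eq_dempster_unnorm[OF assms]
    using total nonneg outside at_most_1 dempster_unnorm_empty[OF assms(2-)] by simp
qed

lemma focal_dempster:
  assumes "finite S" "is_mass S m1" "is_mass S m2" "conflict_free m1 m2"
    and "focal (dempster S m1 m2) A"
  shows "\<exists>B C. focal m1 B \<and> focal m2 C \<and> A = B \<inter> C"
proof -
  have "dempster_unnorm S m1 m2 A \<noteq> 0"
    using assms(5) unfolding focal_def dempster_eq_dempster_unnorm[OF assms(1-4)] by simp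
  then obtain B C where "B \<inter> C = A" "m1 B * m2 C \<noteq> 0"
    unfolding dempster_unnorm_def by (auto elim: sum.not_neutral_contains_not_neutral)
  moreover have "0 \<le> m1 B" "0 \<le> m2 C"
    using assms(2,3) unfolding is_mass_def by auto
  ultimately show ?thesis
    unfolding focal_def by (metis less_eq_real_def mult_eq_0_iff)
qed

lemma cond_embed_Un_complement:
  "E \<subseteq> P \<Longrightarrow> cond_embed \<Theta> P m (E \<union> (\<Theta> - P)) = m E"
  unfolding cond_embed_def by (auto intro: arg_cong[where f = m])

lemma focal_cond_embed:
  assumes "focal (cond_embed \<Theta> P m) A"
  shows "\<exists>E. focal m E \<and> E \<subseteq> P \<and> A = E \<union> (\<Theta> - P)"
proof -
  obtain E where "E \<subseteq> P" "A = E \<union> (\<Theta> - P)"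
    using assms unfolding focal_def cond_embed_def by (auto split: if_splits)
  then show ?thesis
    using assms cond_embed_Un_complement[of E P \<Theta> m] unfolding focal_def by auto
qed

lemma is_mass_cond_embed:
  assumes "finite \<Theta>" "P \<subseteq> \<Theta>" "is_mass P m"
  shows "is_mass \<Theta> (cond_embed \<Theta> P m)"
proof -
  let ?c = "cond_embed \<Theta> P m"
  let ?g = "\<lambda>E. E \<union> (\<Theta> - P)"
  have outside: "?c A = 0" if "A \<notin> ?g ` Pow P" for A
    using that unfolding cond_embed_def by (auto simp del: Un_iff)
  have "inj_on ?g (Pow P)"
    by (rule inj_onI) auto
  then have "(\<Sum>A\<in>?g ` Pow P. ?c A) = (\<Sum>E\<in>Pow P. m E)"
    by (simp add: sum.reindex cond_embed_Un_complement)
  moreover have "(\<Sum>A\<in>Pow \<Theta>. ?c A) = (\<Sum>A\<in>?g ` Pow P. ?c A)"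
    using assms(1,2) outside by (intro sum.mono_neutral_right) auto
  ultimately have "(\<Sum>A\<in>Pow \<Theta>. ?c A) = 1"
    using assms(3) unfolding is_mass_def by simp
  moreover have "?c {} = 0"
  proof (cases "{} \<in> ?g ` Pow P")
    case True
    then have "?c {} = ?c (?g {})" by (metis (no_types) Un_empty imageE)
    also have "\<dots> = m {}" by (rule cond_embed_Un_complement) simp
    finally show ?thesis using assms(3) unfolding is_mass_def by simp
  qed (rule outside)
  moreover have "?c A = 0" if "\<not> A \<subseteq> \<Theta>" for A
    using that assms(2) outside by blast
  moreover have "0 \<le> ?c A \<and> ?c A \<le> 1" for A
    using assms(3) unfolding cond_embed_def is_mass_def by simp
  ultimately show ?thesis
    unfolding is_mass_def by blast
qed

lemma conflict_free_cond_embed: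
  assumes "is_mass P m" "\<And>B. focal M B \<Longrightarrow> P \<subseteq> B"
  shows "conflict_free M (cond_embed \<Theta> P m)"
  unfolding conflict_free_def
proof (intro allI impI)
  fix B C
  assume B: "focal M B" and C: "focal (cond_embed \<Theta> P m) C"
  obtain E where E: "focal m E" "E \<subseteq> P" "C = E \<union> (\<Theta> - P)"
    using focal_cond_embed[OF C] by blast
  then have "E \<subseteq> B \<inter> C"
    using assms(2)[OF B] by blast
  then show "B \<inter> C \<noteq> {}"
    using focal_nonempty[OF assms(1) E(1)] by blast
qed

lemma dempster_list_snoc:
  "xs \<noteq> [] \<Longrightarrow> dempster_list S (xs @ [m]) = dempster S (dempster_list S xs) m"
  by (cases xs) auto

lemma Int_Un_complement:
  assumes "Q \<subseteq> \<Theta>" "R \<subseteq> \<Theta>" "Q \<inter> R = {}" "e \<subseteq> Q" "E \<subseteq> R"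
  shows "(e \<union> (\<Theta> - Q)) \<inter> (E \<union> (\<Theta> - R)) = e \<union> E \<union> (\<Theta> - (Q \<union> R))"
  using assms by blast

definition focal_union ::
    "'t set \<Rightarrow> ('i \<Rightarrow> 't set) \<Rightarrow> ('i \<Rightarrow> 't set \<Rightarrow> real) \<Rightarrow> 'i set \<Rightarrow> 't set \<Rightarrow> bool" where
  "focal_union \<Theta> P m I A \<longleftrightarrow>
     (\<exists>e. (\<forall>i\<in>I. focal (m i) (e i)) \<and> A = (\<Union>i\<in>I. e i) \<union> (\<Theta> - (\<Union>i\<in>I. P i)))"

lemma focal_union_cond_embed:
  "focal (cond_embed \<Theta> (P x) (m x)) A \<Longrightarrow> focal_union \<Theta> P m {x} A"
  unfolding focal_union_def by (drule focal_cond_embed) fastforce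

lemma dempster_cond_embed_insert:
  assumes "finite \<Theta>" "x \<notin> I" "disjoint_family_on P (insert x I)"
    and "\<And>i. i \<in> insert x I \<Longrightarrow> P i \<subseteq> \<Theta>" "\<And>i. i \<in> insert x I \<Longrightarrow> is_mass (P i) (m i)"
    and "is_mass \<Theta> M" "\<And>B. focal M B \<Longrightarrow> focal_union \<Theta> P m I B"
  shows "is_mass \<Theta> (dempster \<Theta> M (cond_embed \<Theta> (P x) (m x)))"
    and "focal (dempster \<Theta> M (cond_embed \<Theta> (P x) (m x))) A \<Longrightarrow> focal_union \<Theta> P m (insert x I) A"
proof -
  let ?f = "cond_embed \<Theta> (P x) (m x)"
  let ?Q = "\<Union>i\<in>I. P i"
  have x: "P x \<subseteq> \<Theta>" "is_mass (P x) (m x)"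
    using assms(4,5) by auto
  have Q: "?Q \<subseteq> \<Theta>" "?Q \<inter> P x = {}"
    using assms(2-4) unfolding disjoint_family_on_def by auto
  have mass_x: "is_mass \<Theta> ?f"
    using is_mass_cond_embed[OF assms(1) x] .
  have no_conflict: "conflict_free M ?f"
  proof (rule conflict_free_cond_embed[OF x(2)])
    fix B
    assume "focal M B"
    then obtain e where "B = (\<Union>i\<in>I. e i) \<union> (\<Theta> - ?Q)"
      using assms(7) unfolding focal_union_def by blast
    then show "P x \<subseteq> B"
      using Q x(1) by blast
  qed
  show "is_mass \<Theta> (dempster \<Theta> M ?f)"
    using is_mass_dempster[OF assms(1,6) mass_x no_conflict] .
  assume A: "focal (dempster \<Theta> M ?f) A"
  obtain B C where BC: "focal M B" "focal ?f C" "A = B \<inter> C"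
    using focal_dempster[OF assms(1,6) mass_x no_conflict A] by blast
  obtain e where e: "\<forall>i\<in>I. focal (m i) (e i)" "B = (\<Union>i\<in>I. e i) \<union> (\<Theta> - ?Q)"
    using assms(7)[OF BC(1)] unfolding focal_union_def by blast
  obtain E where E: "focal (m x) E" "E \<subseteq> P x" "C = E \<union> (\<Theta> - P x)"
    using focal_cond_embed[OF BC(2)] by blast
  have "(\<Union>i\<in>I. e i) \<subseteq> ?Q"
    using e(1) assms(5) focal_subset by fastforce
  then have "A = (\<Union>i\<in>I. e i) \<union> E \<union> (\<Theta> - (?Q \<union> P x))"
    using Int_Un_complement[OF Q(1) x(1) Q(2) _ E(2)] BC(3) e(2) E(3) by blast
  then show "focal_union \<Theta> P m (insert x I) A"
    unfolding focal_union_def using assms(2) e(1) E(1) by (intro exI[of _ "e(x := E)"]) auto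
qed

lemma dempster_list_cond_embed:
  fixes P :: "'i \<Rightarrow> 't set" and m :: "'i \<Rightarrow> 't set \<Rightarrow> real"
  assumes "finite \<Theta>" "xs \<noteq> []" "distinct xs" "disjoint_family_on P (set xs)"
    and "\<And>i. i \<in> set xs \<Longrightarrow> P i \<subseteq> \<Theta>" "\<And>i. i \<in> set xs \<Longrightarrow> is_mass (P i) (m i)"
  shows "is_mass \<Theta> (dempster_list \<Theta> (map (\<lambda>i. cond_embed \<Theta> (P i) (m i)) xs)) \<and>
    (\<forall>A. focal (dempster_list \<Theta> (map (\<lambda>i. cond_embed \<Theta> (P i) (m i)) xs)) A \<longrightarrow>
      focal_union \<Theta> P m (set xs) A)"
  using assms(2-)
proof (induction xs rule: rev_induct)
  case Nil
  then show ?case by simp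
next
  case (snoc x xs)
  show ?case
  proof (cases "xs = []")
    case True
    then show ?thesis
      using is_mass_cond_embed[OF assms(1)] snoc.prems by (auto intro: focal_union_cond_embed)
  next
    case False
    let ?M = "dempster_list \<Theta> (map (\<lambda>i. cond_embed \<Theta> (P i) (m i)) xs)"
    have "is_mass \<Theta> ?M" "\<And>B. focal ?M B \<Longrightarrow> focal_union \<Theta> P m (set xs) B"
      using snoc.IH False snoc.prems by (auto simp: disjoint_family_on_def)
    note step = dempster_cond_embed_insert[where x = x and I = "set xs", OF assms(1) _ _ _ _ this]
    show ?thesis
      using step snoc.prems False by (simp add: dempster_list_snoc)
  qed
qed

lemma refining_UN_singleton:
  "refining \<Omega> \<Theta> \<rho> \<Longrightarrow> \<omega> ` I = \<Omega> \<Longrightarrow> (\<Union>i\<in>I. \<rho> {\<omega> i}) = \<Theta>"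
  unfolding refining_def by auto

lemma refining_disjoint_family_on:
  assumes "refining \<Omega> \<Theta> \<rho>" "inj_on \<omega> I" "\<omega> ` I \<subseteq> \<Omega>"
  shows "disjoint_family_on (\<lambda>i. \<rho> {\<omega> i}) I"
  using assms unfolding refining_def disjoint_family_on_def inj_on_def by (metis image_subset_iff)

lemma outer_reduction_UN_focal:
  assumes "\<omega> ` I = \<Omega>" "\<And>i. i \<in> I \<Longrightarrow> is_mass (\<rho> {\<omega> i}) (m i)"
    and "\<forall>i\<in>I. focal (m i) (e i)"
  shows "outer_reduction \<Omega> \<rho> (\<Union>i\<in>I. e i) = \<Omega>"
proof -
  have "e i \<noteq> {} \<and> e i \<subseteq> \<rho> {\<omega> i}" if i: "i \<in> I" for i
    using focal_nonempty[OF assms(2)[OF i]] focal_subset[OF assms(2)[OF i]] assms(3) i by blast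
  then show ?thesis
    using assms(1) unfolding outer_reduction_def by blast
qed

lemma marginal_eq_vacuous:
  assumes "finite \<Theta>" "is_mass \<Theta> M" "\<And>A. focal M A \<Longrightarrow> outer_reduction \<Omega> \<rho> A = \<Omega>"
  shows "marginal \<Omega> \<Theta> \<rho> M = vacuous \<Omega>"
proof
  fix B
  have null: "M A = 0" if "outer_reduction \<Omega> \<rho> A \<noteq> \<Omega>" for A
  proof -
    have "0 \<le> M A" "\<not> focal M A"
      using assms(2,3) that unfolding is_mass_def by blast+
    then show ?thesis
      unfolding focal_def by simp
  qed
  show "marginal \<Omega> \<Theta> \<rho> M B = vacuous \<Omega> B"
  proof (cases "B = \<Omega>")
    case True
    then have "marginal \<Omega> \<Theta> \<rho> M B = (\<Sum>A\<in>Pow \<Theta>. M A)"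
      unfolding marginal_def using assms(1) null by (intro sum.mono_neutral_left) auto
    then show ?thesis
      using True assms(2) unfolding is_mass_def vacuous_def by simp
  next
    case False
    then have "marginal \<Omega> \<Theta> \<rho> M B = 0"
      unfolding marginal_def using null by (intro sum.neutral) auto
    then show ?thesis
      using False unfolding vacuous_def by simp
  qed
qed

theorem lemma3:
  fixes \<Theta> :: "'t set" and \<Omega> :: "'w set" and \<rho> :: "'w set \<Rightarrow> 't set"
    and N :: nat and \<omega> :: "nat \<Rightarrow> 'w" and m :: "nat \<Rightarrow> 't set \<Rightarrow> real"
  assumes "finite \<Theta>" and "finite \<Omega>" and "N \<ge> 1"
    and "bij_betw \<omega> {1..N} \<Omega>"
    and "refining \<Omega> \<Theta> \<rho>"
    and "\<And>i. i \<in> {1..N} \<Longrightarrow> is_mass (\<rho> {\<omega> i}) (m i)"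
  defines "M \<equiv> dempster_list \<Theta> (map (\<lambda>i. cond_embed \<Theta> (\<rho> {\<omega> i}) (m i)) [1..<N+1])"
  shows "(\<forall>A. focal M A \<longrightarrow>
            (\<exists>e. (\<forall>i\<in>{1..N}. focal (m i) (e i)) \<and> A = (\<Union>i\<in>{1..N}. e i)))
         \<and> marginal \<Omega> \<Theta> \<rho> M = vacuous \<Omega>"
proof -
  have indices: "set [1..<N+1] = {1..N}" "[1..<N+1] \<noteq> []"
    using assms(3) by auto
  have omega: "\<omega> ` {1..N} = \<Omega>" "inj_on \<omega> {1..N}"
    using assms(4) unfolding bij_betw_def by auto
  have cover: "(\<Union>i\<in>{1..N}. \<rho> {\<omega> i}) = \<Theta>"
    using refining_UN_singleton[OF assms(5) omega(1)] .
  have blocks: "\<And>i. i \<in> {1..N} \<Longrightarrow> \<rho> {\<omega> i} \<subseteq> \<Theta>"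
    using cover by blast
  have "disjoint_family_on (\<lambda>i. \<rho> {\<omega> i}) {1..N}"
    using refining_disjoint_family_on[OF assms(5) omega(2)] omega(1) by simp
  from dempster_list_cond_embed[where P = "\<lambda>i. \<rho> {\<omega> i}" and m = m,
      OF assms(1) indices(2) distinct_upt, unfolded indices(1), OF this blocks assms(6)]
  have mass: "is_mass \<Theta> M" and focal_M: "\<And>A. focal M A \<Longrightarrow>
      \<exists>e. (\<forall>i\<in>{1..N}. focal (m i) (e i)) \<and> A = (\<Union>i\<in>{1..N}. e i)"
    unfolding M_def focal_union_def cover by auto
  have "outer_reduction \<Omega> \<rho> A = \<Omega>" if "focal M A" for A
    using focal_M[OF that] outer_reduction_UN_focal[where \<rho> = \<rho> and m = m, OF omega(1) assms(6)]
    by blast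
  then have "marginal \<Omega> \<Theta> \<rho> M = vacuous \<Omega>"
    by (rule marginal_eq_vacuous[OF assms(1) mass])
  then show ?thesis
    using focal_M by blast
qed

end
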